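(* Let $x\in\mathbb{R}^N$, let $1\le T\le N$, $J\ge 1$, $\sigma>0$, and let $\Phi$ be the random filterbank with $J$ i.i.d. filters $w_1,\dots,w_J\sim\mathcal{N}(0,\sigma^2 I_T)$ of length $T$. Then $$\mathbb{E}\big[\|\Phi x\|^2\big]=JT\sigma^2\|x\|^2,\qquad \mathbb{V}\big[\|\Phi x\|^2\big]=2J\sigma^4\sum_{\tau=-T}^{T}\big(T-|\tau|\big)R_{xx}(\tau)^2 .$$
   Context: For $x\in\mathbb{R}^N$ and $w\in\mathbb{R}^T$ with $T\le N$, the circular convolution is $(x*w)[n]=\sum_{k=0}^{T-1}w[k]\,x[(n-k)\bmod N]$ for $0\le n<N$. The circular autocorrelation of $x$ is $R_{xx}(t)=\sum_{k=0}^{N-1}x[k]\,x[(k-t)\bmod N]$ for any integer $t$ (so $R_{xx}(-t)=R_{xx}(t)$ and $R_{xx}(0)=\|x\|^2$). A filterbank with filters $w_1,\dots,w_J\in\mathbb{R}^T$ is the linear map $\Phi:\mathbb{R}^N\to\mathbb{R}^{N\times J}$, $(\Phi x)[n,j]=(x*w_j)[n]$, and $\|\Phi x\|^2=\sum_{j=1}^J\|x*w_j\|^2$ (Euclidean norms). A random filterbank has i.i.d. Gaussian filters as specified. *)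

theory Defs
  imports "HOL-Probability.Probability"
begin

text \<open>Signals in R^N are functions nat => real, only indices 0..N-1 matter.
  Filters in R^T are functions nat => real, only indices 0..T-1 matter.\<close>

definition circ_conv :: "nat \<Rightarrow> nat \<Rightarrow> (nat \<Rightarrow> real) \<Rightarrow> (nat \<Rightarrow> real) \<Rightarrow> nat \<Rightarrow> real" where
  "circ_conv N T x w n = (\<Sum>k<T. w k * x (nat ((int n - int k) mod int N)))"

definition sq_norm_vec :: "nat \<Rightarrow> (nat \<Rightarrow> real) \<Rightarrow> real" where
  "sq_norm_vec N x = (\<Sum>k<N. (x k)\<^sup>2)"

definition autocorr :: "nat \<Rightarrow> (nat \<Rightarrow> real) \<Rightarrow> int \<Rightarrow> real" where
  "autocorr N x t = (\<Sum>k<N. x k * x (nat ((int k - t) mod int N)))"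

definition filterbank_sq_norm :: "nat \<Rightarrow> nat \<Rightarrow> nat \<Rightarrow> (nat \<Rightarrow> nat \<Rightarrow> real) \<Rightarrow> (nat \<Rightarrow> real) \<Rightarrow> real" where
  "filterbank_sq_norm N T J w x = (\<Sum>j<J. sq_norm_vec N (circ_conv N T x (w j)))"

text \<open>Law of the J*T i.i.d. N(0,sigma^2) filter coefficients: omega (j,k) = w_j[k].\<close>
definition gauss_filters :: "nat \<Rightarrow> nat \<Rightarrow> real \<Rightarrow> ((nat \<times> nat) \<Rightarrow> real) measure" where
  "gauss_filters J T \<sigma> = PiM ({..<J} \<times> {..<T}) (\<lambda>_. density lborel (normal_density 0 \<sigma>))"

end

theory Submission
  imports Defs
begin

text \<open>
  The filterbank energy is a quadratic form \<open>\<omega>\<^sup>T Q \<omega>\<close> in the \<open>J T\<close> filter coefficients,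
  where \<open>Q\<close> is block diagonal with \<open>J\<close> copies of the \<open>T \<times> T\<close> Gram matrix of the circular
  shifts of \<open>x\<close>, whose entries are \<open>R\<^sub>x\<^sub>x(l - k)\<close>. For i.i.d. \<open>N(0,\<sigma>\<^sup>2)\<close> coefficients,
  Isserlis' theorem gives mean \<open>\<sigma>\<^sup>2 tr Q\<close> and variance \<open>2 \<sigma>\<^sup>4 \<Sum>\<^sub>a\<^sub>b Q\<^sub>a\<^sub>b\<^sup>2\<close>.
  Here \<open>tr Q = J T R\<^sub>x\<^sub>x(0)\<close>, and in \<open>\<Sum>\<^sub>k\<^sub>,\<^sub>l\<^sub><\<^sub>T R\<^sub>x\<^sub>x(l - k)\<^sup>2\<close> each lag \<open>\<tau>\<close>
  occurs \<open>T - |\<tau>|\<close> times.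
\<close>

text \<open>The moments of \<open>N(0,\<sigma>\<^sup>2)\<close>, as stated in \<open>normal_moment_even\<close>.\<close>
definition gaussian_moment :: "real \<Rightarrow> nat \<Rightarrow> real" where
  "gaussian_moment \<sigma> n =
     (if odd n then 0 else fact n / ((2 / \<sigma>\<^sup>2) ^ (n div 2) * fact (n div 2)))"

lemma gaussian_moment_small:
  "gaussian_moment \<sigma> 0 = 1"
  "gaussian_moment \<sigma> (Suc 0) = 0"
  "gaussian_moment \<sigma> (Suc (Suc 0)) = \<sigma>\<^sup>2"
  "gaussian_moment \<sigma> (Suc (Suc (Suc 0))) = 0"
  "gaussian_moment \<sigma> (Suc (Suc (Suc (Suc 0)))) = 3 * \<sigma> ^ 4"
  by (cases "\<sigma> = 0"; simp add: gaussian_moment_def field_simps power2_eq_square power4_eq_xxxx)+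

lemma has_bochner_integral_normal_power:
  assumes "\<sigma> > 0"
  shows "has_bochner_integral (density lborel (normal_density 0 \<sigma>)) (\<lambda>z. z ^ n) (gaussian_moment \<sigma> n)"
proof (rule has_bochner_integral_density)
  show "has_bochner_integral lborel (\<lambda>z. normal_density 0 \<sigma> z *\<^sub>R z ^ n) (gaussian_moment \<sigma> n)"
  proof (cases "even n")
    case True
    then obtain k where "n = 2 * k" by (auto elim: evenE)
    then show ?thesis using normal_moment_even[OF assms, of 0 k] by (simp add: gaussian_moment_def)
  next
    case False
    then obtain k where "n = 2 * k + 1" by (auto elim: oddE)
    then show ?thesis using normal_moment_odd[OF assms, of 0 k] by (simp add: gaussian_moment_def)
  qed
qed (auto simp: normal_density_nonneg)

definition iid_normal :: "'i set \<Rightarrow> real \<Rightarrow> ('i \<Rightarrow> real) measure" where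
  "iid_normal I \<sigma> = PiM I (\<lambda>_. density lborel (normal_density 0 \<sigma>))"

lemma prob_space_iid_normal:
  fixes I :: "'i set"
  assumes "\<sigma> > 0"
  shows "prob_space (iid_normal I \<sigma>)"
proof -
  interpret prob_space "density lborel (normal_density 0 \<sigma>)"
    using assms by (rule prob_space_normal_density)
  interpret product_prob_space "\<lambda>_::'i. density lborel (normal_density 0 \<sigma>)" I
    by unfold_locales
  show ?thesis unfolding iid_normal_def by (rule prob_space_axioms)
qed

lemma has_bochner_integral_iid_normal_monomial:
  fixes I :: "'i set"
  assumes "\<sigma> > 0" "finite I"
  shows "has_bochner_integral (iid_normal I \<sigma>) (\<lambda>\<omega>. \<Prod>i\<in>I. \<omega> i ^ c i) (\<Prod>i\<in>I. gaussian_moment \<sigma> (c i))"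
proof -
  interpret prob_space "density lborel (normal_density 0 \<sigma>)"
    using assms(1) by (rule prob_space_normal_density)
  interpret product_sigma_finite "\<lambda>_::'i. density lborel (normal_density 0 \<sigma>)"
    by unfold_locales
  note moment = has_bochner_integral_normal_power[OF assms(1)]
  have "integrable (density lborel (normal_density 0 \<sigma>)) (\<lambda>z. z ^ c i)" for i
    using moment by (rule integrable.intros)
  then show ?thesis
    using product_integrable_prod[OF assms(2), of "\<lambda>i z. z ^ c i"]
      product_integral_prod[OF assms(2), of "\<lambda>i z. z ^ c i"]
      moment[THEN has_bochner_integral_integral_eq]
    by (simp add: has_bochner_integral_iff iid_normal_def)
qed

lemma has_bochner_integral_iid_normal_prod_mset:
  fixes I :: "'i set"
  assumes "\<sigma> > 0" "finite I" "set_mset A \<subseteq> I"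
  shows "has_bochner_integral (iid_normal I \<sigma>) (\<lambda>\<omega>. \<Prod>a\<in>#A. \<omega> a)
           (\<Prod>a\<in>set_mset A. gaussian_moment \<sigma> (count A a))"
proof -
  have "(\<Prod>a\<in>#A. \<omega> a) = (\<Prod>i\<in>I. \<omega> i ^ count A i)" for \<omega> :: "'i \<Rightarrow> real"
    unfolding image_prod_mset_multiplicity
    using assms by (intro prod.mono_neutral_left) (auto simp: not_in_iff)
  moreover have "(\<Prod>i\<in>I. gaussian_moment \<sigma> (count A i)) =
      (\<Prod>a\<in>set_mset A. gaussian_moment \<sigma> (count A a))"
    using assms by (intro prod.mono_neutral_right) (auto simp: not_in_iff gaussian_moment_small)
  ultimately show ?thesis
    using has_bochner_integral_iid_normal_monomial[OF assms(1,2), of "count A"] by simp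
qed

lemma has_bochner_integral_iid_normal_pair:
  fixes I :: "'i set"
  assumes "\<sigma> > 0" "finite I" "a \<in> I" "b \<in> I"
  shows "has_bochner_integral (iid_normal I \<sigma>) (\<lambda>\<omega>. \<omega> a * \<omega> b) (\<sigma>\<^sup>2 * of_bool (a = b))"
proof -
  have "(\<Prod>i\<in>set_mset {#a, b#}. gaussian_moment \<sigma> (count {#a, b#} i)) = \<sigma>\<^sup>2 * of_bool (a = b)"
    using assms(1) by (cases "a = b") (simp_all add: gaussian_moment_small)
  then show ?thesis
    using has_bochner_integral_iid_normal_prod_mset[OF assms(1,2), of "{#a, b#}"] assms(3,4)
    by (simp add: mult.commute)
qed

lemma has_bochner_integral_iid_normal_quadruple:
  fixes I :: "'i set"
  assumes "\<sigma> > 0" "finite I" "a \<in> I" "b \<in> I" "c \<in> I" "d \<in> I"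
  shows "has_bochner_integral (iid_normal I \<sigma>) (\<lambda>\<omega>. \<omega> a * \<omega> b * \<omega> c * \<omega> d)
           (\<sigma> ^ 4 * (of_bool (a = b \<and> c = d) + of_bool (a = c \<and> b = d) + of_bool (a = d \<and> b = c)))"
proof -
  let ?A = "{#a, b, c, d#}"
  have "(\<Prod>i\<in>set_mset ?A. gaussian_moment \<sigma> (count ?A i)) =
      \<sigma> ^ 4 * (of_bool (a = b \<and> c = d) + of_bool (a = c \<and> b = d) + of_bool (a = d \<and> b = c))"
    using assms(1)
    by (cases "a = b"; cases "a = c"; cases "a = d"; cases "b = c"; cases "b = d"; cases "c = d")
       (simp_all add: gaussian_moment_small insert_commute power2_eq_square power4_eq_xxxx)
  then show ?thesis
    using has_bochner_integral_iid_normal_prod_mset[OF assms(1,2), of ?A] assms(3-6)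
    by (simp add: mult_ac)
qed

definition quadratic_form :: "'i set \<Rightarrow> ('i \<Rightarrow> 'i \<Rightarrow> real) \<Rightarrow> ('i \<Rightarrow> real) \<Rightarrow> real" where
  "quadratic_form I Q \<omega> = (\<Sum>a\<in>I. \<Sum>b\<in>I. Q a b * (\<omega> a * \<omega> b))"

lemma has_bochner_integral_iid_normal_quadratic_form:
  fixes I :: "'i set"
  assumes "\<sigma> > 0" "finite I"
  shows "has_bochner_integral (iid_normal I \<sigma>) (quadratic_form I Q) (\<sigma>\<^sup>2 * (\<Sum>a\<in>I. Q a a))"
proof -
  have "has_bochner_integral (iid_normal I \<sigma>) (quadratic_form I Q)
      (\<Sum>a\<in>I. \<Sum>b\<in>I. Q a b * (\<sigma>\<^sup>2 * of_bool (a = b)))"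
    unfolding quadratic_form_def
    by (intro has_bochner_integral_sum has_bochner_integral_mult_right
        has_bochner_integral_iid_normal_pair assms)
  moreover have "(\<Sum>a\<in>I. \<Sum>b\<in>I. Q a b * (\<sigma>\<^sup>2 * of_bool (a = b))) = \<sigma>\<^sup>2 * (\<Sum>a\<in>I. Q a a)"
    using assms(2) by (simp add: of_bool_def sum_distrib_left mult.commute if_distrib cong: if_cong)
  ultimately show ?thesis by simp
qed

lemma has_bochner_integral_iid_normal_quadratic_form_square:
  fixes I :: "'i set"
  assumes "\<sigma> > 0" "finite I" and symmetric: "\<And>a b. a \<in> I \<Longrightarrow> b \<in> I \<Longrightarrow> Q a b = Q b a"
  shows "has_bochner_integral (iid_normal I \<sigma>) (\<lambda>\<omega>. (quadratic_form I Q \<omega>)\<^sup>2)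
           (\<sigma> ^ 4 * ((\<Sum>a\<in>I. Q a a)\<^sup>2 + 2 * (\<Sum>a\<in>I. \<Sum>b\<in>I. (Q a b)\<^sup>2)))"
proof -
  define trace where "trace = (\<Sum>a\<in>I. Q a a)"
  define isserlis where "isserlis a b c d =
    \<sigma> ^ 4 * (of_bool (a = b \<and> c = d) + of_bool (a = c \<and> b = d) + of_bool (a = d \<and> b = c))" for a b c d :: 'i
  have square: "(quadratic_form I Q \<omega>)\<^sup>2 =
      (\<Sum>a\<in>I. \<Sum>b\<in>I. Q a b * (\<Sum>c\<in>I. \<Sum>d\<in>I. Q c d * (\<omega> a * \<omega> b * \<omega> c * \<omega> d)))" for \<omega>
    unfolding quadratic_form_def power2_eq_square sum_distrib_right
    unfolding sum_distrib_left by (simp add: mult_ac)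
  have "has_bochner_integral (iid_normal I \<sigma>) (\<lambda>\<omega>. (quadratic_form I Q \<omega>)\<^sup>2)
      (\<Sum>a\<in>I. \<Sum>b\<in>I. Q a b * (\<Sum>c\<in>I. \<Sum>d\<in>I. Q c d * isserlis a b c d))"
    unfolding square isserlis_def
    by (intro has_bochner_integral_sum has_bochner_integral_mult_right
        has_bochner_integral_iid_normal_quadruple assms)
  moreover have "(\<Sum>c\<in>I. \<Sum>d\<in>I. Q c d * isserlis a b c d) =
      \<sigma> ^ 4 * (of_bool (a = b) * trace + 2 * Q a b)" if "a \<in> I" "b \<in> I" for a b
  proof -
    have "(\<Sum>c\<in>I. \<Sum>d\<in>I. Q c d * of_bool (a = b \<and> c = d)) = of_bool (a = b) * trace"
      using assms(2) by (cases "a = b") (simp_all add: trace_def)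
    moreover have "(\<Sum>c\<in>I. \<Sum>d\<in>I. Q c d * of_bool (a = c \<and> b = d)) = Q a b"
      using assms(2) that by (subst sum.remove[of I a]) (auto intro!: sum.neutral)
    moreover have "(\<Sum>c\<in>I. \<Sum>d\<in>I. Q c d * of_bool (a = d \<and> b = c)) = Q a b"
      using assms(2) that symmetric by (subst sum.remove[of I b]) (auto intro!: sum.neutral)
    ultimately show ?thesis
      unfolding isserlis_def distrib_left sum.distrib mult.left_commute[of "Q _ _" "\<sigma> ^ 4"]
      unfolding sum_distrib_left[symmetric] by simp
  qed
  moreover have "(\<Sum>a\<in>I. \<Sum>b\<in>I. Q a b * (\<sigma> ^ 4 * (of_bool (a = b) * trace + 2 * Q a b))) =
      \<sigma> ^ 4 * (trace * (\<Sum>a\<in>I. \<Sum>b\<in>I. Q a b * of_bool (a = b))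
        + 2 * (\<Sum>a\<in>I. \<Sum>b\<in>I. (Q a b)\<^sup>2))"
    unfolding distrib_left sum.distrib sum_distrib_left power2_eq_square
    by (simp add: mult_ac del: sum_mult_of_bool_eq sum_of_bool_mult_eq)
  moreover have "(\<Sum>a\<in>I. \<Sum>b\<in>I. Q a b * of_bool (a = b)) = trace"
    using assms(2) by (simp add: trace_def)
  ultimately show ?thesis
    by (simp add: trace_def power2_eq_square cong: sum.cong)
qed

lemma iid_normal_quadratic_form_variance:
  fixes I :: "'i set"
  assumes "\<sigma> > 0" "finite I" and symmetric: "\<And>a b. a \<in> I \<Longrightarrow> b \<in> I \<Longrightarrow> Q a b = Q b a"
  defines "M \<equiv> iid_normal I \<sigma>"
  shows "(\<integral>\<omega>. (quadratic_form I Q \<omega> - (\<integral>\<omega>'. quadratic_form I Q \<omega>' \<partial>M))\<^sup>2 \<partial>M)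
           = 2 * \<sigma> ^ 4 * (\<Sum>a\<in>I. \<Sum>b\<in>I. (Q a b)\<^sup>2)"
proof -
  interpret prob_space M
    unfolding M_def using assms(1) by (rule prob_space_iid_normal)
  have mean: "has_bochner_integral M (quadratic_form I Q) (\<sigma>\<^sup>2 * (\<Sum>a\<in>I. Q a a))"
    unfolding M_def using assms(1,2) by (rule has_bochner_integral_iid_normal_quadratic_form)
  have square: "has_bochner_integral M (\<lambda>\<omega>. (quadratic_form I Q \<omega>)\<^sup>2)
      (\<sigma> ^ 4 * ((\<Sum>a\<in>I. Q a a)\<^sup>2 + 2 * (\<Sum>a\<in>I. \<Sum>b\<in>I. (Q a b)\<^sup>2)))"
    unfolding M_def using assms(1-3) by (rule has_bochner_integral_iid_normal_quadratic_form_square)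
  have "variance (quadratic_form I Q) = expectation (\<lambda>\<omega>. (quadratic_form I Q \<omega>)\<^sup>2)
      - (expectation (quadratic_form I Q))\<^sup>2"
    using mean square by (intro variance_eq) (auto simp: has_bochner_integral_iff)
  then show ?thesis
    using mean square by (simp add: has_bochner_integral_iff power_mult_distrib algebra_simps)
qed

lemma sum_mod_shift:
  fixes h :: "nat \<Rightarrow> 'a::comm_monoid_add"
  assumes "N > 0"
  shows "(\<Sum>n<N. h (nat ((int n + c) mod int N))) = (\<Sum>n<N. h n)"
  by (rule sum.reindex_bij_witness[where i = "\<lambda>m. nat ((int m - c) mod int N)"])
     (use assms in \<open>auto simp: nat_less_iff mod_diff_left_eq mod_add_left_eq\<close>)

lemma autocorr_eq_sum_shifted_products:
  assumes "N > 0"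
  shows "(\<Sum>n<N. x (nat ((int n - k) mod int N)) * x (nat ((int n - l) mod int N))) = autocorr N x (l - k)"
proof -
  have "(\<Sum>n<N. x (nat ((int n - k) mod int N)) * x (nat ((int n - l) mod int N)))
      = (\<Sum>n<N. x (nat ((int (nat ((int n + k) mod int N)) - k) mod int N))
                 * x (nat ((int (nat ((int n + k) mod int N)) - l) mod int N)))"
    using sum_mod_shift[OF assms, of "\<lambda>n. x (nat ((int n - k) mod int N)) * x (nat ((int n - l) mod int N))" k]
    by simp
  also have "\<dots> = autocorr N x (l - k)"
    unfolding autocorr_def using assms
    by (intro sum.cong refl) (simp add: mod_diff_left_eq algebra_simps)
  finally show ?thesis .
qed

lemma autocorr_uminus:
  assumes "N > 0"
  shows "autocorr N x (- t) = autocorr N x t"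
  using autocorr_eq_sum_shifted_products[OF assms, of x t 0]
    autocorr_eq_sum_shifted_products[OF assms, of x 0 t]
  by (simp add: mult.commute)

lemma autocorr_0: "autocorr N x 0 = sq_norm_vec N x"
  unfolding autocorr_def sq_norm_vec_def power2_eq_square
  by (intro sum.cong refl) simp

lemma sq_norm_circ_conv:
  assumes "N > 0"
  shows "sq_norm_vec N (circ_conv N T x w) = (\<Sum>k<T. \<Sum>l<T. autocorr N x (int l - int k) * (w k * w l))"
proof -
  have "sq_norm_vec N (circ_conv N T x w) = (\<Sum>k<T. \<Sum>l<T. (w k * w l) *
      (\<Sum>n<N. x (nat ((int n - int k) mod int N)) * x (nat ((int n - int l) mod int N))))"
    unfolding sq_norm_vec_def circ_conv_def power2_eq_square sum_distrib_right
    unfolding sum_distrib_left by (simp add: mult_ac sum.swap[of _ "{..<N}"])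
  then show ?thesis
    by (simp add: autocorr_eq_sum_shifted_products[OF assms] mult.commute)
qed

definition filter_gram :: "nat \<Rightarrow> (nat \<Rightarrow> real) \<Rightarrow> nat \<times> nat \<Rightarrow> nat \<times> nat \<Rightarrow> real" where
  "filter_gram N x a b = of_bool (fst a = fst b) * autocorr N x (int (snd b) - int (snd a))"

lemma filterbank_sq_norm_eq_quadratic_form:
  assumes "N > 0"
  shows "filterbank_sq_norm N T J (\<lambda>j k. \<omega> (j, k)) x
           = quadratic_form ({..<J} \<times> {..<T}) (filter_gram N x) \<omega>"
  unfolding filterbank_sq_norm_def sq_norm_circ_conv[OF assms] quadratic_form_def filter_gram_def
  by (simp add: sum.cartesian_product' mult.assoc flip: sum_distrib_left)

lemma sum_interval_symmetric:
  "(\<Sum>\<tau>\<in>{- int T..int T}. F \<tau>) = F 0 + (\<Sum>i<T. F (int i + 1) + F (- int i - 1))"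
proof (induction T)
  case (Suc T)
  have "{- int (Suc T)..int (Suc T)} = insert (- int T - 1) (insert (int T + 1) {- int T..int T})"
    by auto
  then show ?case using Suc by (simp add: algebra_simps)
qed simp

lemma sum_sum_diff_eq_weighted_sum:
  fixes F :: "int \<Rightarrow> 'a::comm_ring_1"
  shows "(\<Sum>k<T. \<Sum>l<T. F (int l - int k)) = (\<Sum>\<tau>\<in>{- int T..int T}. (of_nat T - of_int \<bar>\<tau>\<bar>) * F \<tau>)"
proof (induction T)
  case (Suc T)
  have "(\<Sum>l<T. F (int l - int T)) = (\<Sum>i<T. F (- int i - 1))"
    by (rule sum.nat_diff_reindex[symmetric, THEN trans]) (intro sum.cong refl arg_cong[where f=F]; simp add: of_nat_diff)
  moreover have "(\<Sum>k<T. F (int T - int k)) = (\<Sum>i<T. F (int i + 1))"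
    by (rule sum.nat_diff_reindex[symmetric, THEN trans]) (intro sum.cong refl arg_cong[where f=F]; simp add: of_nat_diff)
  ultimately have "(\<Sum>k<Suc T. \<Sum>l<Suc T. F (int l - int k))
      = (\<Sum>k<T. \<Sum>l<T. F (int l - int k)) + (\<Sum>\<tau>\<in>{- int T..int T}. F \<tau>)"
    by (simp add: sum.distrib sum_interval_symmetric)
  moreover have "{- int (Suc T)..int (Suc T)} = insert (- int T - 1) (insert (int T + 1) {- int T..int T})"
    by auto
  ultimately show ?case
    using Suc by (simp add: sum.distrib[symmetric] algebra_simps)
qed simp

theorem proposition1:
  fixes N T J :: nat and \<sigma> :: real and x :: "nat \<Rightarrow> real"
  assumes "1 \<le> T" and "T \<le> N" and "1 \<le> J" and "\<sigma> > 0"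
  defines "M \<equiv> gauss_filters J T \<sigma>"
    and "Y \<equiv> (\<lambda>\<omega>. filterbank_sq_norm N T J (\<lambda>j k. \<omega> (j, k)) x)"
  shows "(\<integral>\<omega>. Y \<omega> \<partial>M) = real J * real T * \<sigma>\<^sup>2 * sq_norm_vec N x \<and>
         (\<integral>\<omega>. (Y \<omega> - (\<integral>\<omega>'. Y \<omega>' \<partial>M))\<^sup>2 \<partial>M)
           = 2 * real J * \<sigma> ^ 4 *
             (\<Sum>\<tau>\<in>{- int T..int T}. (real T - \<bar>real_of_int \<tau>\<bar>) * (autocorr N x \<tau>)\<^sup>2)"
proof -
  let ?I = "{..<J} \<times> {..<T}" and ?Q = "filter_gram N x"
  have N: "N > 0" and I: "finite ?I" using assms(1,2) by auto
  have M: "M = iid_normal ?I \<sigma>"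
    unfolding M_def gauss_filters_def iid_normal_def ..
  have Y: "Y = quadratic_form ?I ?Q"
    unfolding Y_def filterbank_sq_norm_eq_quadratic_form[OF N] ..
  have symmetric: "?Q a b = ?Q b a" for a b
    using autocorr_uminus[OF N, of x "int (snd b) - int (snd a)"] by (simp add: filter_gram_def)
  have trace: "(\<Sum>a\<in>?I. ?Q a a) = real J * real T * sq_norm_vec N x"
    by (simp add: filter_gram_def autocorr_0 sum.cartesian_product')
  have squares: "(\<Sum>a\<in>?I. \<Sum>b\<in>?I. (?Q a b)\<^sup>2) = real J * (\<Sum>k<T. \<Sum>l<T. (autocorr N x (int l - int k))\<^sup>2)"
  proof -
    have "(of_bool P :: real)\<^sup>2 = of_bool P" for P by simp
    then show ?thesis
      by (simp add: filter_gram_def sum.cartesian_product' power_mult_distrib flip: sum_distrib_left)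
  qed
  show ?thesis
    using has_bochner_integral_iid_normal_quadratic_form[OF assms(4) I, of ?Q]
      iid_normal_quadratic_form_variance[OF assms(4) I, of ?Q, OF symmetric]
      sum_sum_diff_eq_weighted_sum[of "\<lambda>\<tau>. (autocorr N x \<tau>)\<^sup>2" T]
    unfolding M Y trace squares by (simp add: has_bochner_integral_iff mult_ac)
qed

end
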